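(* Let $\mathcal{F}$ be a Furstenberg family. Every dynamical system $(X,T)$ is dynamically compact with respect to $\mathcal{F}$ if and only if $\mathcal{F}$ has the finite intersection property.
   Context: A dynamical system $(X,T)$ consists of a compact metric space $X$ with more than one point and without isolated points, and a continuous surjection $T:X\to X$. A (Furstenberg) family is a collection $\mathcal{F}$ of subsets of $\mathbb{Z}_+=\{0,1,2,\dots\}$ that is hereditary upward ($F_1\subset F_2$, $F_1\in\mathcal{F}$ imply $F_2\in\mathcal{F}$). For $F\subset\mathbb{Z}_+$ and $x\in X$ let $T^Fx=\{T^ix:i\in F\}$. The $\omega_{\mathcal{F}}$-limit set of $x$ is $\omega_{\mathcal{F}}(x)=\bigcap_{F\in\mathcal{F}}\overline{T^Fx}$. The system $(X,T)$ is dynamically compact with respect to $\mathcal{F}$ if $\omega_{\mathcal{F}}(x)\neq\varnothing$ for all $x\in X$. $\mathcal{F}$ has the finite intersection property if the intersection of any finitely many elements of $\mathcal{F}$ is nonempty. *)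

theory Defs
  imports "HOL-Analysis.Analysis"
begin

definition furstenberg_family :: "nat set set \<Rightarrow> bool" where
  "furstenberg_family \<F> \<longleftrightarrow> (\<forall>A B. A \<subseteq> B \<longrightarrow> A \<in> \<F> \<longrightarrow> B \<in> \<F>)"

definition has_fip :: "nat set set \<Rightarrow> bool" where
  "has_fip \<F> \<longleftrightarrow> (\<forall>\<G>. finite \<G> \<longrightarrow> \<G> \<noteq> {} \<longrightarrow> \<G> \<subseteq> \<F> \<longrightarrow> \<Inter>\<G> \<noteq> {})"

definition dynamical_system :: "'a::metric_space set \<Rightarrow> ('a \<Rightarrow> 'a) \<Rightarrow> bool" where
  "dynamical_system X T \<longleftrightarrow>
     compact X \<and> (\<exists>x\<in>X. \<exists>y\<in>X. x \<noteq> y) \<and> (\<forall>x\<in>X. x islimpt X) \<and>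
     continuous_on X T \<and> T ` X = X"

definition orbit_along :: "('a \<Rightarrow> 'a) \<Rightarrow> nat set \<Rightarrow> 'a \<Rightarrow> 'a set" where
  "orbit_along T F x = {(T ^^ i) x | i. i \<in> F}"

definition omega_F :: "nat set set \<Rightarrow> 'a::metric_space set \<Rightarrow> ('a \<Rightarrow> 'a) \<Rightarrow> 'a \<Rightarrow> 'a set" where
  "omega_F \<F> X T x = X \<inter> (\<Inter>F\<in>\<F>. closure (orbit_along T F x))"

definition dynamically_compact :: "nat set set \<Rightarrow> 'a::metric_space set \<Rightarrow> ('a \<Rightarrow> 'a) \<Rightarrow> bool" where
  "dynamically_compact \<F> X T \<longleftrightarrow> (\<forall>x\<in>X. omega_F \<F> X T x \<noteq> {})"

end

theory Submission
  imports Defs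
begin

text \<open>If \<open>\<F>\<close> has the finite intersection property, the closed sets
  \<open>closure (orbit_along T F x)\<close>, \<open>F \<in> \<F>\<close>, have the finite intersection property inside
  the compact space \<open>X\<close>, so their intersection is nonempty. Conversely, if
  \<open>F\<^sub>1 \<inter> \<dots> \<inter> F\<^sub>n = {}\<close> with \<open>F\<^sub>j \<in> \<F>\<close>, label each time \<open>k\<close> by some \<open>j\<close> with
  \<open>k \<notin> F\<^sub>j\<close> and let \<open>x\<close> be this label sequence in the cube \<open>[0,n]\<^sup>\<nat>\<close> under the shift.
  Along \<open>F\<^sub>j\<close> the zeroth coordinate of the orbit avoids the label \<open>j\<close>, so a point of
  \<open>\<omega>\<^sub>\<F>(x)\<close> would have a zeroth coordinate that is a label different from every label.
  Neither direction uses that \<open>\<F>\<close> is hereditary upward.\<close>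

lemma funpow_in_invariant_set:
  assumes "T ` X \<subseteq> X" and "x \<in> X"
  shows "(T ^^ i) x \<in> X"
  by (induction i) (use assms in auto)

lemma omega_F_nonempty_if_fip:
  fixes X :: "'a::metric_space set"
  assumes fip: "has_fip \<F>" and "compact X" and TX: "T ` X \<subseteq> X" and x: "x \<in> X"
  shows "omega_F \<F> X T x \<noteq> {}"
proof -
  let ?C = "(\<lambda>F. closure (orbit_along T F x)) ` \<F>"
  have "X \<inter> \<Inter>?C \<noteq> {}"
  proof (rule compact_fip[THEN iffD1, OF \<open>compact X\<close>, rule_format])
    fix B assume "B \<subseteq> ?C" "finite B"
    then obtain G where G: "G \<subseteq> \<F>" "finite G" "B = (\<lambda>F. closure (orbit_along T F x)) ` G"
      by (meson finite_subset_image)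
    show "X \<inter> \<Inter>B \<noteq> {}"
    proof (cases "G = {}")
      case True
      then show ?thesis using G x by auto
    next
      case False
      then obtain i where "i \<in> \<Inter>G"
        using fip G unfolding has_fip_def by blast
      then have "(T ^^ i) x \<in> X \<inter> \<Inter>B"
        using funpow_in_invariant_set[OF TX x] G(3) closure_subset
        unfolding orbit_along_def by fastforce
      then show ?thesis by blast
    qed
  qed auto
  then show ?thesis unfolding omega_F_def by simp
qed

lemma dynamically_compact_if_fip:
  fixes X :: "'a::metric_space set"
  assumes "has_fip \<F>" and "dynamical_system X T"
  shows "dynamically_compact \<F> X T"
  using assms omega_F_nonempty_if_fip[of \<F> X T]
  unfolding dynamically_compact_def dynamical_system_def by simp

definition shift :: "(nat \<Rightarrow> 'a) \<Rightarrow> nat \<Rightarrow> 'a" where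
  "shift y = (\<lambda>k. y (Suc k))"

definition cube :: "real \<Rightarrow> (nat \<Rightarrow> real) set" where
  "cube M = {y. \<forall>k. y k \<in> {0..M}}"

lemma funpow_shift: "(shift ^^ i) x = (\<lambda>k. x (k + i))"
  by (induction i) (auto simp: shift_def)

lemma cube_eq_PiE: "cube M = PiE UNIV (\<lambda>_. {0..M})"
  unfolding cube_def by (auto simp: PiE_def)

lemma dynamical_system_shift_cube:
  assumes "M > 0"
  shows "dynamical_system (cube M) shift"
  unfolding dynamical_system_def
proof (intro conjI ballI)
  show "compact (cube M)"
    using compactin_PiE[of "\<lambda>_. euclidean" UNIV "\<lambda>_. {0..M}"]
    by (simp add: cube_eq_PiE euclidean_product_topology)
  have "(\<lambda>_. 0) \<in> cube M" "(\<lambda>_. M) \<in> cube M"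
    using assms by (auto simp: cube_def)
  moreover have "(\<lambda>_::nat. 0) \<noteq> (\<lambda>_. M)"
    using assms by (metis less_irrefl)
  ultimately show "\<exists>x\<in>cube M. \<exists>y\<in>cube M. x \<noteq> y" by blast
  then have not_singleton: "cube M \<noteq> {a}" for a by auto
  have "connected (cube M)"
    using connectedin_PiE[of "\<lambda>_. euclidean" UNIV "\<lambda>_. {0..M}"]
    by (simp add: cube_eq_PiE euclidean_product_topology)
  then show "x islimpt cube M" if "x \<in> cube M" for x
    using connected_imp_perfect not_singleton that by blast
  show "continuous_on (cube M) shift"
    unfolding shift_def
    by (intro continuous_on_coordinatewise_then_product
        continuous_on_subset[OF continuous_on_product_coordinates]) auto
  show "shift ` cube M = cube M"
  proof
    show "shift ` cube M \<subseteq> cube M" by (auto simp: shift_def cube_def)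
    show "cube M \<subseteq> shift ` cube M"
    proof
      fix y assume y: "y \<in> cube M"
      let ?z = "\<lambda>k. case k of 0 \<Rightarrow> 0 | Suc j \<Rightarrow> y j"
      have "?z \<in> cube M" using y assms by (auto simp: cube_def split: nat.split)
      moreover have "y = shift ?z" by (simp add: shift_def)
      ultimately show "y \<in> shift ` cube M" by blast
    qed
  qed
qed

lemma closure_orbit_along_subset:
  assumes "closed S" and "\<And>i. i \<in> F \<Longrightarrow> (T ^^ i) x \<in> S"
  shows "closure (orbit_along T F x) \<subseteq> S"
  using assms by (intro closure_minimal) (auto simp: orbit_along_def)

lemma omega_F_shift_empty_if_not_fip:
  assumes "finite G" "G \<noteq> {}" "G \<subseteq> \<F>" "\<Inter>G = {}"
  shows "\<exists>x\<in>cube (card G). omega_F \<F> (cube (card G)) shift x = {}"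
proof -
  obtain h where h: "bij_betw h G {0..<card G}"
    using ex_bij_betw_finite_nat[OF \<open>finite G\<close>] by blast
  have "\<exists>F. F \<in> G \<and> k \<notin> F" for k using \<open>\<Inter>G = {}\<close> by blast
  then obtain c where c: "\<And>k. c k \<in> G \<and> k \<notin> c k" by metis
  define x where "x = (\<lambda>k. real (h (c k)))"
  have "x \<in> cube (card G)"
  proof -
    have "h (c k) < card G" for k
      using bij_betwE[OF h] c[of k] by simp
    then show ?thesis unfolding x_def cube_def by (auto simp: less_imp_le)
  qed
  moreover have "omega_F \<F> (cube (card G)) shift x = {}"
  proof (rule ccontr)
    assume "omega_F \<F> (cube (card G)) shift x \<noteq> {}"
    then obtain z where z: "\<And>F. F \<in> \<F> \<Longrightarrow> z \<in> closure (orbit_along shift F x)"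
      unfolding omega_F_def by blast
    have label: "z 0 \<in> (\<lambda>F'. real (h F')) ` (G - {F})" if "F \<in> G" for F
    proof -
      let ?S = "(\<lambda>y. y 0) -` ((\<lambda>F'. real (h F')) ` (G - {F}))"
      have "closed ?S"
        using \<open>finite G\<close>
        by (intro closed_vimage continuous_on_product_coordinates finite_imp_closed) auto
      moreover have "(shift ^^ i) x \<in> ?S" if "i \<in> F" for i
        using c[of i] that by (auto simp: funpow_shift x_def)
      ultimately have "closure (orbit_along shift F x) \<subseteq> ?S"
        by (rule closure_orbit_along_subset)
      moreover have "z \<in> closure (orbit_along shift F x)"
        using z \<open>F \<in> G\<close> \<open>G \<subseteq> \<F>\<close> by blast
      ultimately show ?thesis by blast
    qed
    obtain F0 where "F0 \<in> G" using \<open>G \<noteq> {}\<close> by blast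
    then obtain F1 where F1: "F1 \<in> G - {F0}" "z 0 = real (h F1)"
      using label by auto
    obtain F2 where F2: "F2 \<in> G - {F1}" "z 0 = real (h F2)"
      using label[of F1] F1(1) by blast
    have "F1 = F2"
      using F1 F2 bij_betw_imp_inj_on[OF h] by (auto dest: inj_onD)
    then show False using F2 by blast
  qed
  ultimately show ?thesis by blast
qed

lemma fip_if_dynamically_compact_shift_cubes:
  assumes "\<And>M. M > 0 \<Longrightarrow> dynamically_compact \<F> (cube M) shift"
  shows "has_fip \<F>"
  unfolding has_fip_def
proof (intro allI impI notI)
  fix G assume G: "finite G" "G \<noteq> {}" "G \<subseteq> \<F>" "\<Inter>G = {}"
  then have "card G > 0" by (simp add: card_gt_0_iff)
  then show False
    using omega_F_shift_empty_if_not_fip[OF G] assms[of "card G"]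
    unfolding dynamically_compact_def by auto
qed

theorem theorem3p1:
  fixes \<F> :: "nat set set"
  assumes "furstenberg_family \<F>"
  shows "(has_fip \<F> \<longrightarrow>
            (\<forall>(X :: 'a::metric_space set) T. dynamical_system X T \<longrightarrow> dynamically_compact \<F> X T))
       \<and> ((\<forall>(X :: (nat \<Rightarrow> real) set) T. dynamical_system X T \<longrightarrow> dynamically_compact \<F> X T)
            \<longrightarrow> has_fip \<F>)"
proof (intro conjI impI allI)
  fix X :: "'a::metric_space set" and T
  assume "has_fip \<F>" "dynamical_system X T"
  then show "dynamically_compact \<F> X T" by (rule dynamically_compact_if_fip)
next
  assume "\<forall>(X :: (nat \<Rightarrow> real) set) T. dynamical_system X T \<longrightarrow> dynamically_compact \<F> X T"
  then show "has_fip \<F>"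
    by (intro fip_if_dynamically_compact_shift_cubes) (simp add: dynamical_system_shift_cube)
qed

end
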